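(* Let $A$ be a finitely generated free abelian group of rank $r$ and $M$ a finitely generated $\mathbb{Z}A$-module. Assume that for each subgroup $B\subset A$ with $\mathrm{rank}(B)<r$ there exist a positive integer $k$ and elements $a_1,\dots,a_k\in A\setminus B$ such that the product $(e_{a_1}-1)\cdots(e_{a_k}-1)$ annihilates $M$. Then $M$ is finitely generated as an abelian group.
   Context: $A$ is written additively; for $a\in A$, $e_a$ denotes the corresponding basis element of the group ring $\mathbb{Z}A$ (so $e_ae_b=e_{a+b}$ and $\mathbb{Z}A$ is a Laurent polynomial ring in $r$ variables). *)

theory Defs
  imports "HOL-Analysis.Analysis" "HOL-Library.Poly_Mapping"
begin

text \<open>The free abelian group A of rank r = CARD('n) is modelled as int ^ 'n.
  Its integral group ring ZA is the ring of finitely supported functions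
  A \<Rightarrow>0 int with convolution product.\<close>

type_synonym 'n grp = "int ^ 'n"
type_synonym 'n grpring = "('n grp \<Rightarrow>\<^sub>0 int)"

definition e :: "'n::finite grp \<Rightarrow> 'n grpring" where
  "e a = Poly_Mapping.single a 1"

definition is_subgroup :: "'n::finite grp set \<Rightarrow> bool" where
  "is_subgroup B \<longleftrightarrow> 0 \<in> B \<and> (\<forall>x\<in>B. \<forall>y\<in>B. x - y \<in> B)"

definition zindep :: "'n::finite grp set \<Rightarrow> bool" where
  "zindep S \<longleftrightarrow> finite S \<and>
     (\<forall>c :: 'n grp \<Rightarrow> int. (\<Sum>s\<in>S. (\<chi> i. c s * s $ i)) = 0 \<longrightarrow> (\<forall>s\<in>S. c s = 0))"

definition grp_rank :: "'n::finite grp set \<Rightarrow> nat" where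
  "grp_rank B = Max {card S | S. S \<subseteq> B \<and> zindep S}"

definition fg_abelian :: "('n::finite grpring \<Rightarrow> 'm::ab_group_add \<Rightarrow> 'm) \<Rightarrow> bool" where
  "fg_abelian smul \<longleftrightarrow> (\<exists>S. finite S \<and>
      (\<forall>m. \<exists>c :: 'm \<Rightarrow> int. m = (\<Sum>s\<in>S. smul (of_int (c s)) s)))"

end

theory Submission
  imports Defs
begin

text \<open>
  For a direction \<open>v \<noteq> 0\<close> the lattice points orthogonal to \<open>v\<close> form a subgroup of rank
  \<open>< r\<close>, so the hypothesis yields a product of factors \<open>e\<^sub>a - 1\<close> with \<open>v \<bullet> a \<noteq> 0\<close> that
  kills \<open>M\<close>. Up to a unit each factor is \<open>1 - e\<^sub>b\<close> with \<open>v \<bullet> b > 0\<close>, so \<open>M\<close> is killed by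
  some \<open>1 + y\<close> with \<open>y\<close> supported in the open half-space \<open>v \<bullet> b > 0\<close>. Compactness of the
  unit sphere gives finitely many such \<open>y\<close> serving all directions with a uniform margin
  \<open>\<epsilon>\<close>. For \<open>|a|\<close> large, taking \<open>v = -a/|a|\<close>, the relation \<open>(1 + y) e\<^sub>a s = 0\<close> expresses
  \<open>e\<^sub>a s\<close> as an integer combination of strictly shorter translates \<open>e\<^sub>a\<^sub>+\<^sub>b s\<close>. By descent,
  \<open>M\<close> is generated as an abelian group by the \<open>e\<^sub>b s\<close> with \<open>|b|\<close> bounded and \<open>s\<close> in a
  finite generating set.
\<close>

definition of_int_vec :: "int ^ 'n \<Rightarrow> 'a::ring_1 ^ 'n" where
  "of_int_vec a = (\<chi> i. of_int (a $ i))"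

abbreviation real_vec :: "int ^ 'n \<Rightarrow> real ^ 'n" where
  "real_vec \<equiv> of_int_vec"

lemma of_int_vec_0 [simp]: "of_int_vec 0 = 0"
  and of_int_vec_add: "of_int_vec (a + b) = of_int_vec a + of_int_vec b"
  and of_int_vec_minus: "of_int_vec (- a) = - of_int_vec a"
  and of_int_vec_diff: "of_int_vec (a - b) = of_int_vec a - of_int_vec b"
  by (simp_all add: of_int_vec_def vec_eq_iff)

lemma inj_of_int_vec: "inj (of_int_vec :: int ^ 'n \<Rightarrow> 'a::ring_char_0 ^ 'n)"
  by (auto simp: inj_def of_int_vec_def vec_eq_iff)

lemma common_denominator:
  fixes c :: "'a \<Rightarrow> rat"
  assumes "finite S"
  obtains D :: int and d :: "'a \<Rightarrow> int"
  where "D > 0" "\<And>s. s \<in> S \<Longrightarrow> of_int (d s) = of_int D * c s"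
proof -
  have "\<exists>D :: int. D > 0 \<and> (\<forall>s\<in>S. of_int D * c s \<in> \<int>)"
    using assms
  proof (induction S rule: finite_induct)
    case empty
    show ?case by (intro exI[of _ 1]) simp
  next
    case (insert x S)
    then obtain D :: int where D: "D > 0" "\<forall>s\<in>S. of_int D * c s \<in> \<int>" by blast
    obtain p q where pq: "quotient_of (c x) = (p, q)" by fastforce
    then have q: "q > 0" and cx: "c x = of_int p / of_int q"
      by (simp_all add: quotient_of_denom_pos quotient_of_div)
    have "of_int (D * q) * c s \<in> \<int>" if "s \<in> insert x S" for s
    proof (cases "s = x")
      case True
      then show ?thesis using q by (simp add: cx)
    next
      case False
      then have "of_int q * (of_int D * c s) \<in> \<int>" using that D(2) by (simp add: Ints_mult)
      then show ?thesis by (simp add: mult_ac)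
    qed
    then show ?case using D(1) q by (intro exI[of _ "D * q"]) simp
  qed
  then obtain D :: int where D: "D > 0" "\<forall>s\<in>S. \<exists>k :: int. of_int k = of_int D * c s"
    by (metis Ints_cases)
  then obtain d :: "'a \<Rightarrow> int" where "\<forall>s\<in>S. of_int (d s) = of_int D * c s"
    by (auto dest!: bchoice)
  then show ?thesis using that D(1) by blast
qed

lemma zindep_imp_independent_rat:
  fixes S :: "(int ^ 'n) set"
  assumes "zindep S"
  shows "vec.independent (of_int_vec ` S :: (rat ^ 'n) set)"
proof -
  have fin: "finite S" using assms by (simp add: zindep_def)
  have inj: "inj_on (of_int_vec :: _ \<Rightarrow> rat ^ 'n) S"
    using inj_on_subset[OF inj_of_int_vec subset_UNIV] .
  show ?thesis unfolding vec.independent_explicit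
  proof (intro conjI allI impI ballI)
    show "finite (of_int_vec ` S :: (rat ^ 'n) set)" using fin by simp
    fix c :: "rat ^ 'n \<Rightarrow> rat" and w :: "rat ^ 'n"
    assume rel: "(\<Sum>v\<in>of_int_vec ` S. c v *s v) = 0" and w: "w \<in> of_int_vec ` S"
    obtain D :: int and d :: "int ^ 'n \<Rightarrow> int"
      where D: "D > 0" and d: "\<And>s. s \<in> S \<Longrightarrow> of_int (d s) = of_int D * c (of_int_vec s)"
      using common_denominator[OF fin, of "\<lambda>s. c (of_int_vec s)"] by blast
    have "(\<Sum>s\<in>S. (\<chi> i. d s * s $ i)) = 0"
    proof (rule vec_eq_iff[THEN iffD2, rule_format])
      fix i
      have "rat_of_int ((\<Sum>s\<in>S. (\<chi> i. d s * s $ i)) $ i)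
          = (\<Sum>s\<in>S. of_int (d s) * of_int (s $ i))"
        by (simp add: sum_component)
      also have "\<dots> = (\<Sum>s\<in>S. of_int D * (c (of_int_vec s) * of_int (s $ i)))"
        by (rule sum.cong) (simp_all add: d)
      also have "\<dots> = of_int D * (\<Sum>s\<in>S. c (of_int_vec s) *s of_int_vec s) $ i"
        by (simp add: sum_component sum_distrib_left of_int_vec_def)
      also have "\<dots> = 0"
        using rel by (simp add: sum.reindex[OF inj])
      finally show "(\<Sum>s\<in>S. (\<chi> i. d s * s $ i)) $ i = 0 $ i"
        by (simp only: of_int_eq_0_iff zero_index)
    qed
    then have "\<forall>s\<in>S. d s = 0" using assms by (simp add: zindep_def)
    then show "c w = 0" using w d D(1) by auto
  qed
qed

lemma card_zindep_orthogonal_less: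
  fixes v :: "real ^ 'n" and S :: "(int ^ 'n) set"
  assumes "v \<noteq> 0" and "zindep S" and orth: "\<forall>a\<in>S. v \<bullet> real_vec a = 0"
  shows "card S < CARD('n)"
proof -
  define B where "B = (of_int_vec ` S :: (rat ^ 'n) set)"
  have indep: "vec.independent B"
    unfolding B_def using assms(2) by (rule zindep_imp_independent_rat)
  have "inj_on (of_int_vec :: _ \<Rightarrow> rat ^ 'n) S"
    using inj_on_subset[OF inj_of_int_vec subset_UNIV] .
  then have card_B: "card B = card S"
    unfolding B_def by (rule card_image)
  (* v need not be rational, so it is used only through the \<rat>-linear functional L on
     rational vectors, where \<int>-independence has become linear independence. *)
  define L :: "rat ^ 'n \<Rightarrow> real" where "L x = (\<Sum>i\<in>UNIV. v $ i * of_rat (x $ i))" for x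
  have "L (x + y) = L x + L y" for x y
    by (simp add: L_def of_rat_add distrib_left sum.distrib)
  moreover have "L (c *s x) = of_rat c * L x" for c x
    by (simp add: L_def of_rat_mult sum_distrib_left mult_ac)
  ultimately have "vec.subspace {x. L x = 0}"
    by (simp add: vec.subspace_def L_def)
  moreover have "B \<subseteq> {x. L x = 0}"
    using orth by (auto simp: B_def L_def of_int_vec_def inner_vec_def)
  ultimately have span_B: "vec.span B \<subseteq> {x. L x = 0}"
    by (rule vec.span_minimal[rotated])
  obtain j where "v $ j \<noteq> 0"
    using assms(1) by (auto simp: vec_eq_iff)
  moreover have "L (axis j 1) = v $ j"
    by (simp add: L_def axis_def if_distrib cong: if_cong)
  ultimately have "axis j 1 \<notin> vec.span B"
    using span_B by auto
  then have "vec.independent (insert (axis j 1) B)"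
    using indep by (rule vec.independent_insertI)
  then have "card (insert (axis j 1) B) \<le> CARD('n)"
    using vec.independent_card_le_dim[of _ UNIV] by (simp add: card_cart_basis)
  moreover have "card (insert (axis j 1) B) = Suc (card S)"
  proof -
    have "finite B"
      using indep vec.independent_bound_general by blast
    moreover have "axis j 1 \<notin> B"
      using \<open>axis j 1 \<notin> vec.span B\<close> vec.span_base by blast
    ultimately show ?thesis
      using card_B by simp
  qed
  ultimately show ?thesis
    by simp
qed

lemma grp_rank_orthogonal_less:
  fixes v :: "real ^ 'n"
  assumes "v \<noteq> 0"
  shows "grp_rank {a. v \<bullet> real_vec a = 0} < CARD('n)"
proof -
  let ?K = "{card S | S. S \<subseteq> {a. v \<bullet> real_vec a = 0} \<and> zindep S}"
  have "?K \<subseteq> {..<CARD('n)}"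
    using card_zindep_orthogonal_less[OF assms] by auto
  moreover have "0 \<in> ?K"
    by (intro CollectI exI[of _ "{}"]) (simp add: zindep_def)
  ultimately show ?thesis
    unfolding grp_rank_def by (subst Max_less_iff) (auto dest: finite_subset)
qed

lemma is_subgroup_orthogonal: "is_subgroup {a. v \<bullet> real_vec a = 0}"
  by (simp add: is_subgroup_def of_int_vec_diff inner_diff_right)

lemma e_add: "e (a + b) = e a * e b"
  by (simp add: e_def mult_single)

lemma e_0 [simp]: "e 0 = 1"
  by (simp add: e_def)

lemma e_dvd_1: "e a dvd 1"
proof
  show "1 = e a * e (- a)"
    by (simp flip: e_add)
qed

definition pos_supported :: "real ^ 'n \<Rightarrow> 'n::finite grpring \<Rightarrow> bool" where
  "pos_supported v y \<longleftrightarrow> (\<forall>b\<in>Poly_Mapping.keys y. 0 < v \<bullet> real_vec b)"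

lemma pos_supported_add:
  "pos_supported v y \<Longrightarrow> pos_supported v z \<Longrightarrow> pos_supported v (y + z)"
  using keys_add[of y z] by (auto simp: pos_supported_def)

lemma pos_supported_mult:
  assumes "pos_supported v y" and "pos_supported v z"
  shows "pos_supported v (y * z)"
  unfolding pos_supported_def
proof
  fix b assume "b \<in> Poly_Mapping.keys (y * z)"
  then obtain c d where "b = c + d" "c \<in> Poly_Mapping.keys y" "d \<in> Poly_Mapping.keys z"
    using keys_mult[of y z] by blast
  then show "0 < v \<bullet> real_vec b"
    using assms by (simp add: pos_supported_def of_int_vec_add inner_add_right add_pos_pos)
qed

lemma e_minus_one_eq_unit_mult:
  assumes "v \<bullet> real_vec a \<noteq> 0"
  obtains u y where "u dvd 1" "pos_supported v y" "e a - 1 = u * (1 + y)"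
proof (cases "v \<bullet> real_vec a > 0")
  case True
  then have "pos_supported v (- e a)"
    by (simp add: pos_supported_def e_def)
  moreover have "e a - 1 = - 1 * (1 + - e a)"
    by simp
  ultimately show ?thesis
    using that[of "- 1"] by simp
next
  case False
  then have "pos_supported v (- e (- a))"
    using assms by (simp add: pos_supported_def e_def of_int_vec_minus)
  moreover have "e a - 1 = e a * (1 + - e (- a))"
    by (simp add: algebra_simps flip: e_add)
  ultimately show ?thesis
    using that e_dvd_1 by blast
qed

lemma prod_e_minus_one_eq_unit_mult:
  assumes "\<forall>i\<in>I. v \<bullet> real_vec (a i) \<noteq> 0"
  shows "\<exists>u y. u dvd 1 \<and> pos_supported v y \<and> (\<Prod>i\<in>I. e (a i) - 1) = u * (1 + y)"
  using assms
proof (induction I rule: infinite_finite_induct)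
  case (insert i I)
  then obtain u y where uy: "u dvd 1" "pos_supported v y" "(\<Prod>i\<in>I. e (a i) - 1) = u * (1 + y)"
    by auto
  obtain u' y' where uy': "u' dvd 1" "pos_supported v y'" "e (a i) - 1 = u' * (1 + y')"
    using insert.prems e_minus_one_eq_unit_mult by blast
  have "(\<Prod>i\<in>insert i I. e (a i) - 1) = (u' * u) * (1 + (y' + y + y' * y))"
    using insert.hyps by (simp add: uy(3) uy'(3) algebra_simps)
  moreover have "pos_supported v (y' + y + y' * y)"
    using uy(2) uy'(2) by (intro pos_supported_add pos_supported_mult)
  ultimately show ?case
    using mult_dvd_mono[OF uy'(1) uy(1)] by auto
qed (rule exI[of _ 1], rule exI[of _ 0], simp add: pos_supported_def)+

lemma finite_lattice_ball: "finite {a :: int ^ 'n. norm (real_vec a) \<le> R}"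
proof -
  have "{a :: int ^ 'n. norm (real_vec a) \<le> R} \<subseteq> vec_lambda ` (UNIV \<rightarrow>\<^sub>E {-\<lceil>R\<rceil>..\<lceil>R\<rceil>})"
  proof
    fix a :: "int ^ 'n" assume "a \<in> {a. norm (real_vec a) \<le> R}"
    then have bound: "\<bar>a $ i\<bar> \<le> \<lceil>R\<rceil>" for i
      using component_le_norm_cart[of "real_vec a" i] by (simp add: of_int_vec_def) linarith
    have "a $ i \<in> {-\<lceil>R\<rceil>..\<lceil>R\<rceil>}" for i
      using bound[of i] by (simp add: abs_le_iff)
    then have "vec_nth a \<in> UNIV \<rightarrow>\<^sub>E {-\<lceil>R\<rceil>..\<lceil>R\<rceil>}"
      by (simp add: PiE_iff)
    then show "a \<in> vec_lambda ` (UNIV \<rightarrow>\<^sub>E {-\<lceil>R\<rceil>..\<lceil>R\<rceil>})"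
      by (rule rev_image_eqI) simp
  qed
  then show ?thesis
    by (rule finite_subset) (simp add: finite_PiE)
qed

lemma card_lattice_ball_less:
  fixes a a' :: "int ^ 'n"
  assumes "norm (real_vec a') < norm (real_vec a)"
  shows "card {c :: int ^ 'n. norm (real_vec c) < norm (real_vec a')}
    < card {c :: int ^ 'n. norm (real_vec c) < norm (real_vec a)}"
proof (rule psubset_card_mono)
  show "finite {c :: int ^ 'n. norm (real_vec c) < norm (real_vec a)}"
    by (rule finite_subset[OF _ finite_lattice_ball[of "norm (real_vec a)"]]) auto
  have "a' \<in> {c. norm (real_vec c) < norm (real_vec a)} - {c. norm (real_vec c) < norm (real_vec a')}"
    using assms by simp
  moreover have "{c :: int ^ 'n. norm (real_vec c) < norm (real_vec a')}
      \<subseteq> {c. norm (real_vec c) < norm (real_vec a)}"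
    using assms by auto
  ultimately show "{c :: int ^ 'n. norm (real_vec c) < norm (real_vec a')}
      \<subset> {c. norm (real_vec c) < norm (real_vec a)}"
    by blast
qed

lemma norm_add_less:
  fixes x y :: "'a::real_inner"
  assumes "x \<bullet> y \<le> - \<epsilon> * norm x" and "norm y \<le> C" and "C\<^sup>2 < 2 * \<epsilon> * norm x"
  shows "norm (x + y) < norm x"
proof -
  have "(norm y)\<^sup>2 \<le> C\<^sup>2"
    using assms(2) by (simp add: power_mono)
  then have "(norm (x + y))\<^sup>2 < (norm x)\<^sup>2"
    using assms(1,3) by (simp add: power2_norm_eq_inner inner_add_left inner_add_right inner_commute)
  then show ?thesis
    by (rule power2_less_imp_less) simp
qed

lemma compact_uniformly_positive:
  fixes S :: "'a::real_inner set" and K :: "'i \<Rightarrow> 'a set"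
  assumes "compact S" and fin: "\<forall>y\<in>Y. finite (K y)"
    and pos: "\<forall>u\<in>S. \<exists>y\<in>Y. \<forall>b\<in>K y. 0 < u \<bullet> b"
  obtains Y0 \<epsilon> where "finite Y0" "Y0 \<subseteq> Y" "\<epsilon> > 0" "\<forall>u\<in>S. \<exists>y\<in>Y0. \<forall>b\<in>K y. \<epsilon> \<le> u \<bullet> b"
proof -
  define V where "V p = (\<Inter>b\<in>K (fst p). {u. snd p < u \<bullet> b})" for p :: "'i \<times> real"
  have "open (V p)" if "p \<in> Y \<times> {0<..}" for p
    unfolding V_def using that fin
    by (intro open_INT) (auto simp: inner_commute open_halfspace_gt)
  moreover have "S \<subseteq> (\<Union>p\<in>Y \<times> {0<..}. V p)"
  proof
    fix u assume "u \<in> S"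
    then obtain y where y: "y \<in> Y" "\<forall>b\<in>K y. 0 < u \<bullet> b"
      using pos by blast
    (* inserting 1 keeps Min meaningful when K y is empty; likewise for \<epsilon> below *)
    define \<delta> where "\<delta> = Min (insert 1 ((\<lambda>b. u \<bullet> b) ` K y)) / 2"
    have "\<delta> > 0"
      using y fin by (simp add: \<delta>_def)
    moreover have "\<delta> < u \<bullet> b" if "b \<in> K y" for b
    proof -
      have "Min (insert 1 ((\<lambda>b. u \<bullet> b) ` K y)) \<le> u \<bullet> b"
        using that y(1) fin by (intro Min_le) auto
      then show ?thesis
        using \<open>\<delta> > 0\<close> by (simp add: \<delta>_def)
    qed
    ultimately show "u \<in> (\<Union>p\<in>Y \<times> {0<..}. V p)"
      using y(1) by (intro UN_I[of "(y, \<delta>)"]) (auto simp: V_def)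
  qed
  ultimately obtain P where P: "P \<subseteq> Y \<times> {0<..}" "finite P" "S \<subseteq> (\<Union>p\<in>P. V p)"
    using compactE_image[OF \<open>compact S\<close>] by metis
  define \<epsilon> where "\<epsilon> = Min (insert 1 (snd ` P))"
  have "\<epsilon> > 0"
    using P(1,2) by (auto simp: \<epsilon>_def)
  moreover have "\<exists>y\<in>fst ` P. \<forall>b\<in>K y. \<epsilon> \<le> u \<bullet> b" if u: "u \<in> S" for u
  proof -
    obtain p where p: "p \<in> P" "u \<in> V p"
      using P(3) u by blast
    have "\<epsilon> \<le> snd p"
      using p(1) P(2) by (simp add: \<epsilon>_def)
    then show ?thesis
      using p by (intro bexI[of _ "fst p"]) (auto simp: V_def)
  qed
  moreover have "fst ` P \<subseteq> Y"
    using P(1) by auto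
  ultimately show ?thesis
    using that[of "fst ` P" \<epsilon>] P(2) by blast
qed

locale grpring_module = module smul for smul :: "'n::finite grpring \<Rightarrow> 'm::ab_group_add \<Rightarrow> 'm"
begin

(* M as an abelian group: Z.span F is the subgroup generated by F. *)
sublocale Z: module "\<lambda>k :: int. smul (of_int k)"
  by unfold_locales (simp_all add: scale_right_distrib scale_left_distrib)

lemma annihilator_pos_supported:
  assumes ann: "\<forall>m. smul (\<Prod>i\<in>I. e (a i) - 1) m = 0" and "\<forall>i\<in>I. v \<bullet> real_vec (a i) \<noteq> 0"
  obtains y where "pos_supported v y" "\<forall>m. smul (1 + y) m = 0"
proof -
  obtain u y where u: "u dvd 1" and y: "pos_supported v y"
    and prod: "(\<Prod>i\<in>I. e (a i) - 1) = u * (1 + y)"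
    using prod_e_minus_one_eq_unit_mult[OF assms(2)] by (elim exE conjE)
  obtain w where w: "1 = u * w"
    using u by (rule dvdE)
  have "smul (1 + y) m = 0" for m
  proof -
    have "smul (1 + y) m = smul ((u * w) * (1 + y)) m"
      by (simp only: flip: w) simp
    also have "\<dots> = smul w (smul (\<Prod>i\<in>I. e (a i) - 1) m)"
      by (simp only: prod scale_scale mult_ac)
    also have "\<dots> = 0"
      using ann by simp
    finally show ?thesis .
  qed
  then show ?thesis
    using that y by blast
qed

lemma uniform_annihilators:
  assumes H: "\<forall>B. is_subgroup B \<and> grp_rank B < CARD('n) \<longrightarrow>
           (\<exists>k::nat. \<exists>a :: nat \<Rightarrow> 'n grp. k > 0 \<and> (\<forall>i<k. a i \<notin> B) \<and>
              (\<forall>m. smul (\<Prod>i<k. e (a i) - 1) m = 0))"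
  obtains Y \<epsilon> C where "\<epsilon> > 0" "\<forall>y\<in>Y. \<forall>m. smul (1 + y) m = 0"
    "\<forall>u\<in>sphere 0 1. \<exists>y\<in>Y. \<forall>b\<in>Poly_Mapping.keys y. \<epsilon> \<le> u \<bullet> real_vec b"
    "\<forall>y\<in>Y. \<forall>b\<in>Poly_Mapping.keys y. norm (real_vec b) \<le> C"
proof -
  define Yann where "Yann = {y. \<forall>m. smul (1 + y) m = 0}"
  have pos: "\<forall>u\<in>sphere 0 1. \<exists>y\<in>Yann. \<forall>b\<in>real_vec ` Poly_Mapping.keys y. 0 < u \<bullet> b"
  proof
    fix u :: "real ^ 'n" assume "u \<in> sphere 0 1"
    then have "u \<noteq> 0"
      by auto
    then have "is_subgroup {a. u \<bullet> real_vec a = 0} \<and> grp_rank {a. u \<bullet> real_vec a = 0} < CARD('n)"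
      by (simp add: is_subgroup_orthogonal grp_rank_orthogonal_less)
    with H obtain k :: nat and a :: "nat \<Rightarrow> 'n grp"
      where out: "\<forall>i<k. a i \<notin> {a. u \<bullet> real_vec a = 0}"
        and ann: "\<forall>m. smul (\<Prod>i<k. e (a i) - 1) m = 0"
      by blast
    have "\<forall>i\<in>{..<k}. u \<bullet> real_vec (a i) \<noteq> 0"
      using out by simp
    with ann obtain y where "pos_supported u y" "\<forall>m. smul (1 + y) m = 0"
      by (rule annihilator_pos_supported)
    then show "\<exists>y\<in>Yann. \<forall>b\<in>real_vec ` Poly_Mapping.keys y. 0 < u \<bullet> b"
      by (auto simp: Yann_def pos_supported_def)
  qed
  have fin: "\<forall>y\<in>Yann. finite (real_vec ` Poly_Mapping.keys y)"
    by simp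
  obtain Y \<epsilon> where Y: "finite Y" "Y \<subseteq> Yann" "\<epsilon> > 0"
    and cover: "\<forall>u\<in>sphere 0 1. \<exists>y\<in>Y. \<forall>b\<in>real_vec ` Poly_Mapping.keys y. \<epsilon> \<le> u \<bullet> b"
    by (rule compact_uniformly_positive[OF compact_sphere fin pos])
  have "bounded (real_vec ` (\<Union>y\<in>Y. Poly_Mapping.keys y))"
    using Y(1) by (intro finite_imp_bounded) simp
  then obtain C where "\<forall>y\<in>Y. \<forall>b\<in>Poly_Mapping.keys y. norm (real_vec b) \<le> C"
    unfolding bounded_iff by blast
  moreover have "\<forall>y\<in>Y. \<forall>m. smul (1 + y) m = 0"
    using Y(2) by (auto simp: Yann_def)
  moreover have "\<forall>u\<in>sphere 0 1. \<exists>y\<in>Y. \<forall>b\<in>Poly_Mapping.keys y. \<epsilon> \<le> u \<bullet> real_vec b"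
    using cover by simp
  ultimately show ?thesis
    using that Y(3) by blast
qed

lemma smul_in_Z_span:
  assumes "\<forall>b\<in>Poly_Mapping.keys r. smul (e b) s \<in> Z.span T"
  shows "smul r s \<in> Z.span T"
proof (rule frag_induction[of r "Poly_Mapping.keys r" "\<lambda>c. smul c s \<in> Z.span T"])
  show "smul 0 s \<in> Z.span T"
    by (simp add: Z.span_zero)
  show "smul (frag_of b) s \<in> Z.span T" if "b \<in> Poly_Mapping.keys r" for b
    using assms that by (simp add: e_def)
  show "smul (c - c') s \<in> Z.span T"
    if "smul c s \<in> Z.span T" and "smul c' s \<in> Z.span T" for c c'
    using that by (simp add: scale_left_diff_distrib Z.span_diff)
qed simp

lemma translate_in_Z_span_of_annihilator:
  assumes "\<forall>m. smul (1 + y) m = 0"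
  shows "smul (e a) s \<in> Z.span ((\<lambda>b. smul (e (a + b)) s) ` Poly_Mapping.keys y)"
proof -
  have "smul (e a) s + smul y (smul (e a) s) = smul (1 + y) (smul (e a) s)"
    by (simp only: scale_left_distrib scale_one)
  also have "\<dots> = 0"
    using assms by blast
  finally have "smul (e a) s = - smul y (smul (e a) s)"
    by (simp add: eq_neg_iff_add_eq_0)
  moreover have "smul y (smul (e a) s) \<in> Z.span ((\<lambda>b. smul (e (a + b)) s) ` Poly_Mapping.keys y)"
    by (rule smul_in_Z_span) (auto simp: add.commute mult.commute intro: Z.span_base simp flip: e_add)
  ultimately show ?thesis
    by (metis Z.span_neg)
qed

lemma translates_in_Z_span_ball:
  assumes ann: "\<forall>y\<in>Y. \<forall>m. smul (1 + y) m = 0"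
    and cover: "\<forall>u\<in>sphere 0 1. \<exists>y\<in>Y. \<forall>b\<in>Poly_Mapping.keys y. \<epsilon> \<le> u \<bullet> real_vec b"
    and bound: "\<forall>y\<in>Y. \<forall>b\<in>Poly_Mapping.keys y. norm (real_vec b) \<le> C"
    and "\<epsilon> > 0"
  shows "smul (e a) s \<in> Z.span {smul (e b) s | b. norm (real_vec b) \<le> C\<^sup>2 / (2 * \<epsilon>)}"
    (is "_ \<in> Z.span ?F")
proof (induction a rule: measure_induct_rule[where f = "\<lambda>a :: int ^ 'n. card {c :: int ^ 'n. norm (real_vec c) < norm (real_vec a)}"])
  case (less a)
  show ?case
  proof (cases "norm (real_vec a) \<le> C\<^sup>2 / (2 * \<epsilon>)")
    case True
    then show ?thesis
      by (intro Z.span_base) blast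
  next
    case False
    then have far: "C\<^sup>2 < 2 * \<epsilon> * norm (real_vec a)"
      using \<open>\<epsilon> > 0\<close> by (simp add: not_le pos_divide_less_eq algebra_simps)
    have "0 \<le> C\<^sup>2 / (2 * \<epsilon>)"
      using \<open>\<epsilon> > 0\<close> by simp
    then have a_pos: "0 < norm (real_vec a)"
      using False by linarith
    define u where "u = - (1 / norm (real_vec a)) *\<^sub>R real_vec a"
    have "u \<in> sphere 0 1"
      using a_pos by (simp add: u_def)
    then obtain y where y: "y \<in> Y" "\<forall>b\<in>Poly_Mapping.keys y. \<epsilon> \<le> u \<bullet> real_vec b"
      using cover by blast
    have "smul (e (a + b)) s \<in> Z.span ?F" if b: "b \<in> Poly_Mapping.keys y" for b
    proof (rule less.IH)
      have "\<epsilon> * norm (real_vec a) \<le> (u \<bullet> real_vec b) * norm (real_vec a)"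
        using y(2) b a_pos by simp
      then have "real_vec a \<bullet> real_vec b \<le> - \<epsilon> * norm (real_vec a)"
        using a_pos by (simp add: u_def)
      then have "norm (real_vec (a + b)) < norm (real_vec a)"
        unfolding of_int_vec_add using bound y(1) b far by (intro norm_add_less) auto
      then show "card {c :: int ^ 'n. norm (real_vec c) < norm (real_vec (a + b))}
          < card {c :: int ^ 'n. norm (real_vec c) < norm (real_vec a)}"
        by (rule card_lattice_ball_less)
    qed
    then have "Z.span ((\<lambda>b. smul (e (a + b)) s) ` Poly_Mapping.keys y) \<subseteq> Z.span ?F"
      by (intro Z.span_minimal) auto
    then show ?thesis
      using translate_in_Z_span_of_annihilator ann y(1) by blast
  qed
qed

lemma Z_span_eq_UNIV_if_translates:
  assumes "span S = UNIV" and "\<forall>a. \<forall>s\<in>S. smul (e a) s \<in> Z.span F"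
  shows "Z.span F = UNIV"
proof -
  have "m \<in> Z.span F" for m
  proof -
    have "m \<in> span S"
      using assms(1) by simp
    then show ?thesis
    proof (induction rule: span_induct_alt)
      case base
      show ?case
        by (rule Z.span_zero)
    next
      case (step c x y)
      then show ?case
        using assms(2) by (intro Z.span_add smul_in_Z_span) auto
    qed
  qed
  then show ?thesis
    by auto
qed

lemma fg_abelian_if_Z_span_eq_UNIV:
  assumes "finite F" and "Z.span F = UNIV"
  shows "fg_abelian smul"
  unfolding fg_abelian_def
proof (rule exI[of _ F], intro conjI allI)
  show "finite F"
    by fact
  fix m
  have "m \<in> range (\<lambda>c. \<Sum>t\<in>F. smul (of_int (c t)) t)"
    using assms Z.span_finite by blast
  then show "\<exists>c. m = (\<Sum>t\<in>F. smul (of_int (c t)) t)"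
    by blast
qed

end

theorem theoremD:
  fixes smul :: "'n::finite grpring \<Rightarrow> 'm::ab_group_add \<Rightarrow> 'm"
  assumes "module smul"
    and "\<exists>S. finite S \<and> module.span smul S = UNIV"
    and "\<forall>B. is_subgroup B \<and> grp_rank B < CARD('n) \<longrightarrow>
           (\<exists>k::nat. \<exists>a :: nat \<Rightarrow> 'n grp. k > 0 \<and> (\<forall>i<k. a i \<notin> B) \<and>
              (\<forall>m. smul (\<Prod>i<k. e (a i) - 1) m = 0))"
  shows "fg_abelian smul"
proof -
  interpret grpring_module smul
    by (rule grpring_module.intro) (rule assms(1))
  obtain S where S: "finite S" "span S = UNIV"
    using assms(2) by blast
  obtain Y \<epsilon> C where "\<epsilon> > 0" "\<forall>y\<in>Y. \<forall>m. smul (1 + y) m = 0"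
    "\<forall>u\<in>sphere 0 1. \<exists>y\<in>Y. \<forall>b\<in>Poly_Mapping.keys y. \<epsilon> \<le> u \<bullet> real_vec b"
    "\<forall>y\<in>Y. \<forall>b\<in>Poly_Mapping.keys y. norm (real_vec b) \<le> C"
    by (rule uniform_annihilators[OF assms(3)])
  note translates = translates_in_Z_span_ball[OF this(2-4,1)]
  define F where "F = (\<lambda>(b, s). smul (e b) s) ` ({b. norm (real_vec b) \<le> C\<^sup>2 / (2 * \<epsilon>)} \<times> S)"
  have "finite F"
    unfolding F_def using finite_lattice_ball S(1) by (intro finite_imageI finite_cartesian_product)
  moreover have "Z.span F = UNIV"
  proof (rule Z_span_eq_UNIV_if_translates[OF S(2)], intro allI ballI)
    fix a s assume "s \<in> S"
    then have "{smul (e b) s | b. norm (real_vec b) \<le> C\<^sup>2 / (2 * \<epsilon>)} \<subseteq> F"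
      by (auto simp: F_def)
    then show "smul (e a) s \<in> Z.span F"
      using translates Z.span_mono by blast
  qed
  ultimately show ?thesis
    by (rule fg_abelian_if_Z_span_eq_UNIV)
qed

end
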